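(* Let $\mathcal T$ be an atomic orbital category. For all unital $\mathcal T$-weak indexing systems $\mathcal C,\mathcal D$, we have $\nabla(\mathcal C\vee\mathcal D)=\nabla(\mathcal C)\cup\nabla(\mathcal D)$.
   Context: For a small category $\mathcal T$, $\mathbb F_{\mathcal T}$ is the full subcategory of $\mathrm{Fun}(\mathcal T^{op},\mathrm{Set})$ on finite coproducts of representables; $\mathcal T$ is orbital if $\mathbb F_{\mathcal T}$ has pullbacks, and atomic if every morphism of $\mathcal T$ admitting a section is an isomorphism. $\mathbb F_V:=\mathbb F_{\mathcal T,/V}$, $*_V$ terminal, $n\cdot S$ the $n$-fold coproduct; for $U\to V$, $\mathrm{Res}^V_U$ is pullback and $\mathrm{Ind}^V_U$ postcomposition. A full $\mathcal T$-subcategory assigns isomorphism-closed classes $\mathcal C_V\subseteq\mathrm{Ob}\,\mathbb F_V$ stable under restriction. For $S\in\mathbb F_V$ with orbits $U$ and $T_U\in\mathbb F_U$, $\coprod_U^ST_U:=\coprod_U\mathrm{Ind}_U^VT_U$. A $\mathcal T$-weak indexing system is a full $\mathcal T$-subcategory with $\mathcal C_V\neq\emptyset\Rightarrow *_V\in\mathcal C_V$ and closed under $\coprod^S_UT_U$ for $S\in\mathcal C_V$, $T_U\in\mathcal C_U$; these form a lattice under inclusion with join $\vee$. It is unital if every $\mathcal C_V$ is nonempty and $S\sqcup S'\in\mathcal C_V\Rightarrow S,S'\in\mathcal C_V$. $\nabla(\mathcal C)=\{V\in\mathcal T\mid 2\cdot *_V\in\mathcal C_V\}$. *)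

theory Defs
  imports Main
begin

record ('o,'m) category =
  Ob  :: "'o set"
  Mor :: "'m set"
  Dom :: "'m \<Rightarrow> 'o"
  Cod :: "'m \<Rightarrow> 'o"
  Cmp :: "'m \<Rightarrow> 'm \<Rightarrow> 'm"   (* Cmp g f = g \<circ> f *)
  Idt :: "'o \<Rightarrow> 'm"

definition is_category :: "('o,'m) category \<Rightarrow> bool" where
  "is_category T \<longleftrightarrow>
     (\<forall>f\<in>Mor T. Dom T f \<in> Ob T \<and> Cod T f \<in> Ob T) \<and>
     (\<forall>a\<in>Ob T. Idt T a \<in> Mor T \<and> Dom T (Idt T a) = a \<and> Cod T (Idt T a) = a) \<and>
     (\<forall>f\<in>Mor T. \<forall>g\<in>Mor T. Cod T f = Dom T g \<longrightarrow>
        Cmp T g f \<in> Mor T \<and> Dom T (Cmp T g f) = Dom T f \<and> Cod T (Cmp T g f) = Cod T g) \<and>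
     (\<forall>f\<in>Mor T. Cmp T f (Idt T (Dom T f)) = f \<and> Cmp T (Idt T (Cod T f)) f = f) \<and>
     (\<forall>f\<in>Mor T. \<forall>g\<in>Mor T. \<forall>h\<in>Mor T. Cod T f = Dom T g \<longrightarrow> Cod T g = Dom T h \<longrightarrow>
        Cmp T h (Cmp T g f) = Cmp T (Cmp T h g) f)"

definition cat_iso :: "('o,'m) category \<Rightarrow> 'm \<Rightarrow> bool" where
  "cat_iso T f \<longleftrightarrow> f \<in> Mor T \<and> (\<exists>g\<in>Mor T. Dom T g = Cod T f \<and> Cod T g = Dom T f \<and>
      Cmp T g f = Idt T (Dom T f) \<and> Cmp T f g = Idt T (Cod T f))"

definition atomic :: "('o,'m) category \<Rightarrow> bool" where
  "atomic T \<longleftrightarrow> (\<forall>f\<in>Mor T. (\<exists>s\<in>Mor T. Dom T s = Cod T f \<and> Cod T s = Dom T f \<and>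
       Cmp T f s = Idt T (Cod T f)) \<longrightarrow> cat_iso T f)"

text \<open>An object of F_T is a finite list of objects of T (standing for the coproduct
of the corresponding representables). By the Yoneda lemma and connectedness of
representables, a morphism from the coproduct over xs to the coproduct over ys is a
function phi on indices of xs to indices of ys together with morphisms
g i : xs!i -> ys!(phi i) of T.\<close>

definition fobj :: "('o,'m) category \<Rightarrow> 'o list \<Rightarrow> bool" where
  "fobj T xs \<longleftrightarrow> set xs \<subseteq> Ob T"

definition fhom :: "('o,'m) category \<Rightarrow> 'o list \<Rightarrow> 'o list \<Rightarrow> ((nat \<Rightarrow> nat) \<times> (nat \<Rightarrow> 'm)) set" where
  "fhom T xs ys = {(\<phi>, g).
     (\<forall>i<length xs. \<phi> i < length ys \<and> g i \<in> Mor T \<and> Dom T (g i) = xs ! i \<and> Cod T (g i) = ys ! (\<phi> i)) \<and>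
     (\<forall>i. length xs \<le> i \<longrightarrow> \<phi> i = 0 \<and> g i = undefined)}"

text \<open>Composition b after a, where a has source of length n.\<close>
definition fcomp :: "('o,'m) category \<Rightarrow> nat \<Rightarrow> (nat \<Rightarrow> nat) \<times> (nat \<Rightarrow> 'm)
    \<Rightarrow> (nat \<Rightarrow> nat) \<times> (nat \<Rightarrow> 'm) \<Rightarrow> (nat \<Rightarrow> nat) \<times> (nat \<Rightarrow> 'm)" where
  "fcomp T n b a =
     (\<lambda>i. if i < n then fst b (fst a i) else 0,
      \<lambda>i. if i < n then Cmp T (snd b (fst a i)) (snd a i) else undefined)"

definition fid :: "('o,'m) category \<Rightarrow> 'o list \<Rightarrow> (nat \<Rightarrow> nat) \<times> (nat \<Rightarrow> 'm)" where
  "fid T xs = (\<lambda>i. if i < length xs then i else 0,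
               \<lambda>i. if i < length xs then Idt T (xs ! i) else undefined)"

definition is_pullback :: "('o,'m) category \<Rightarrow> 'o list \<Rightarrow> 'o list \<Rightarrow> 'o list
    \<Rightarrow> (nat \<Rightarrow> nat) \<times> (nat \<Rightarrow> 'm) \<Rightarrow> (nat \<Rightarrow> nat) \<times> (nat \<Rightarrow> 'm)
    \<Rightarrow> (nat \<Rightarrow> nat) \<times> (nat \<Rightarrow> 'm) \<Rightarrow> (nat \<Rightarrow> nat) \<times> (nat \<Rightarrow> 'm) \<Rightarrow> bool" where
  "is_pullback T A B P f g p1 p2 \<longleftrightarrow>
     fobj T P \<and> p1 \<in> fhom T P A \<and> p2 \<in> fhom T P B \<and>
     fcomp T (length P) f p1 = fcomp T (length P) g p2 \<and>
     (\<forall>Q q1 q2. fobj T Q \<and> q1 \<in> fhom T Q A \<and> q2 \<in> fhom T Q B \<and>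
        fcomp T (length Q) f q1 = fcomp T (length Q) g q2 \<longrightarrow>
        (\<exists>!u. u \<in> fhom T Q P \<and> fcomp T (length Q) p1 u = q1 \<and> fcomp T (length Q) p2 u = q2))"

definition orbital :: "('o,'m) category \<Rightarrow> bool" where
  "orbital T \<longleftrightarrow> (\<forall>A B C f g. fobj T A \<and> fobj T B \<and> fobj T C \<and> f \<in> fhom T A C \<and> g \<in> fhom T B C
      \<longrightarrow> (\<exists>P p1 p2. is_pullback T A B P f g p1 p2))"

text \<open>An object of F_V = F_T/V (V an object of T, i.e. the representable [V]) is a pair
(ys, h) where h k : ys!k -> V.\<close>

definition fobj_over :: "('o,'m) category \<Rightarrow> 'o \<Rightarrow> ('o list \<times> (nat \<Rightarrow> 'm)) set" where
  "fobj_over T V = {(ys, h). fobj T ys \<and>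
     (\<forall>k<length ys. h k \<in> Mor T \<and> Dom T (h k) = ys ! k \<and> Cod T (h k) = V) \<and>
     (\<forall>k. length ys \<le> k \<longrightarrow> h k = undefined)}"

definition to_base :: "'o list \<times> (nat \<Rightarrow> 'm) \<Rightarrow> (nat \<Rightarrow> nat) \<times> (nat \<Rightarrow> 'm)" where
  "to_base S = (\<lambda>_. 0, snd S)"

definition fhom_over :: "('o,'m) category \<Rightarrow> 'o list \<times> (nat \<Rightarrow> 'm) \<Rightarrow> 'o list \<times> (nat \<Rightarrow> 'm)
    \<Rightarrow> ((nat \<Rightarrow> nat) \<times> (nat \<Rightarrow> 'm)) set" where
  "fhom_over T S S' = {f \<in> fhom T (fst S) (fst S'). fcomp T (length (fst S)) (to_base S') f = to_base S}"

definition iso_over :: "('o,'m) category \<Rightarrow> 'o list \<times> (nat \<Rightarrow> 'm) \<Rightarrow> 'o list \<times> (nat \<Rightarrow> 'm) \<Rightarrow> bool" where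
  "iso_over T S S' \<longleftrightarrow> (\<exists>f f'. f \<in> fhom_over T S S' \<and> f' \<in> fhom_over T S' S \<and>
      fcomp T (length (fst S)) f' f = fid T (fst S) \<and> fcomp T (length (fst S')) f f' = fid T (fst S'))"

definition star :: "('o,'m) category \<Rightarrow> 'o \<Rightarrow> 'o list \<times> (nat \<Rightarrow> 'm)" where
  "star T V = ([V], \<lambda>k. if k = 0 then Idt T V else undefined)"

definition two_star :: "('o,'m) category \<Rightarrow> 'o \<Rightarrow> 'o list \<times> (nat \<Rightarrow> 'm)" where
  "two_star T V = ([V, V], \<lambda>k. if k < 2 then Idt T V else undefined)"

definition coprod_over :: "'o list \<times> (nat \<Rightarrow> 'm) \<Rightarrow> 'o list \<times> (nat \<Rightarrow> 'm) \<Rightarrow> 'o list \<times> (nat \<Rightarrow> 'm)" where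
  "coprod_over S S' = (fst S @ fst S',
     \<lambda>k. if k < length (fst S) then snd S k else snd S' (k - length (fst S)))"

text \<open>The object coprod_U Ind_U^V T_U, given as a list of pairs (structure map g_i : U_i -> V
of the orbit U_i of S, object T_i of F_{U_i}).\<close>
fun bigcoprod :: "('o,'m) category \<Rightarrow> ('m \<times> ('o list \<times> (nat \<Rightarrow> 'm))) list \<Rightarrow> 'o list \<times> (nat \<Rightarrow> 'm)" where
  "bigcoprod T [] = ([], \<lambda>_. undefined)"
| "bigcoprod T ((m, Y) # rest) =
     (fst Y @ fst (bigcoprod T rest),
      \<lambda>k. if k < length (fst Y) then Cmp T m (snd Y k) else snd (bigcoprod T rest) (k - length (fst Y)))"

definition ind_coprod :: "('o,'m) category \<Rightarrow> 'o list \<times> (nat \<Rightarrow> 'm) \<Rightarrow> (nat \<Rightarrow> 'o list \<times> (nat \<Rightarrow> 'm))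
    \<Rightarrow> 'o list \<times> (nat \<Rightarrow> 'm)" where
  "ind_coprod T S Ts = bigcoprod T (map (\<lambda>i. (snd S i, Ts i)) [0..<length (fst S)])"

type_synonym ('o,'m) tsub = "'o \<Rightarrow> ('o list \<times> (nat \<Rightarrow> 'm)) set"

definition full_Tsub :: "('o,'m) category \<Rightarrow> ('o,'m) tsub \<Rightarrow> bool" where
  "full_Tsub T C \<longleftrightarrow>
     (\<forall>V. V \<notin> Ob T \<longrightarrow> C V = {}) \<and>
     (\<forall>V\<in>Ob T. C V \<subseteq> fobj_over T V) \<and>
     (\<forall>V\<in>Ob T. \<forall>S S'. S \<in> C V \<and> S' \<in> fobj_over T V \<and> iso_over T S S' \<longrightarrow> S' \<in> C V) \<and>
     (\<forall>m\<in>Mor T. \<forall>S P p1 p2. S \<in> C (Cod T m) \<and>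
        is_pullback T (fst S) [Dom T m] P (to_base S) (\<lambda>_. 0, \<lambda>i. if i = 0 then m else undefined) p1 p2
        \<longrightarrow> (P, snd p2) \<in> C (Dom T m))"

definition weak_indexing_system :: "('o,'m) category \<Rightarrow> ('o,'m) tsub \<Rightarrow> bool" where
  "weak_indexing_system T C \<longleftrightarrow> full_Tsub T C \<and>
     (\<forall>V\<in>Ob T. C V \<noteq> {} \<longrightarrow> star T V \<in> C V) \<and>
     (\<forall>V\<in>Ob T. \<forall>S Ts. S \<in> C V \<and> (\<forall>i<length (fst S). Ts i \<in> C (fst S ! i))
        \<longrightarrow> ind_coprod T S Ts \<in> C V)"

definition unital :: "('o,'m) category \<Rightarrow> ('o,'m) tsub \<Rightarrow> bool" where
  "unital T C \<longleftrightarrow> weak_indexing_system T C \<and>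
     (\<forall>V\<in>Ob T. C V \<noteq> {}) \<and>
     (\<forall>V\<in>Ob T. \<forall>S S'. S \<in> fobj_over T V \<and> S' \<in> fobj_over T V \<and> coprod_over S S' \<in> C V
        \<longrightarrow> S \<in> C V \<and> S' \<in> C V)"

definition wis_join :: "('o,'m) category \<Rightarrow> ('o,'m) tsub \<Rightarrow> ('o,'m) tsub \<Rightarrow> ('o,'m) tsub" where
  "wis_join T C D = (\<lambda>V. \<Inter> {E V | E. weak_indexing_system T E \<and> (\<forall>W. C W \<subseteq> E W) \<and> (\<forall>W. D W \<subseteq> E W)})"

definition nabla :: "('o,'m) category \<Rightarrow> ('o,'m) tsub \<Rightarrow> 'o set" where
  "nabla T C = {V \<in> Ob T. two_star T V \<in> C V}"

end

theory Submission
  imports Defs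
begin

(*
  Fix a set N of objects of T and call S in F_V uniquely lifting if every morphism m : W -> V
  with W not in N lifts through S (i.e. gives a map *_W -> S in F_V) in at most one way. These
  S form a weak indexing system: lifts are transported along isomorphisms, lifts through a
  restriction Res^V_W S correspond to lifts through S by the pullback property, and a lift
  through a coproduct of Ind^V_U T_U splits into a lift through S and one through some T_U.

  If C is unital with nabla C contained in N, then C lies in this system. Two distinct lifts
  of m : W -> V through S in C_V become two sections of Res^V_W S hitting distinct orbits;
  by atomicity both orbits map isomorphically onto W. Taking *_U on these two orbits and the
  empty object elsewhere (both in C by unitality) and forming the coproduct gives 2 *_W in
  C_W, so W is in nabla C, a contradiction.

  For N = nabla C \<union> nabla D the join of C and D therefore lies in the system, while 2 *_V has
  two lifts of the identity of V; hence V is in N.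
*)

lemma fhomD:
  assumes "f \<in> fhom T A B" and "i < length A"
  shows "fst f i < length B" and "snd f i \<in> Mor T"
    and "Dom T (snd f i) = A ! i" and "Cod T (snd f i) = B ! fst f i"
  using assms unfolding fhom_def by auto

lemma fobj_overD:
  assumes "S \<in> fobj_over T V" and "k < length (fst S)"
  shows "snd S k \<in> Mor T" and "Dom T (snd S k) = fst S ! k" and "Cod T (snd S k) = V"
    and "fst S ! k \<in> Ob T"
  using assms unfolding fobj_over_def fobj_def by auto

lemma to_base_in_fhom: "S \<in> fobj_over T V \<Longrightarrow> to_base S \<in> fhom T (fst S) [V]"
  unfolding fobj_over_def fhom_def to_base_def by auto

lemma fhom_over_structure_map:
  assumes "f \<in> fhom_over T S' S" and "k < length (fst S')"
  shows "Cmp T (snd S (fst f k)) (snd f k) = snd S' k"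
proof -
  have "fcomp T (length (fst S')) (to_base S) f = to_base S'"
    using assms(1) by (simp add: fhom_over_def)
  from fun_cong[OF arg_cong[where f = snd, OF this], of k] show ?thesis
    using assms(2) by (simp add: fcomp_def to_base_def)
qed

lemma bigcoprod_nth:
  "k < length (fst (bigcoprod T L)) \<Longrightarrow>
   \<exists>i<length L. \<exists>j<length (fst (snd (L ! i))).
     k = sum_list (map (\<lambda>p. length (fst (snd p))) (take i L)) + j \<and>
     fst (bigcoprod T L) ! k = fst (snd (L ! i)) ! j \<and>
     snd (bigcoprod T L) k = Cmp T (fst (L ! i)) (snd (snd (L ! i)) j)"
proof (induction L arbitrary: k)
  case Nil
  then show ?case by simp
next
  case (Cons p L)
  obtain f Y where p: "p = (f, Y)" by (cases p)
  show ?case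
  proof (cases "k < length (fst Y)")
    case True
    then show ?thesis using p by (intro exI[of _ 0]) (auto simp: nth_append)
  next
    case False
    then have "k - length (fst Y) < length (fst (bigcoprod T L))" using Cons.prems p by auto
    from Cons.IH[OF this] obtain i j where "i < length L" "j < length (fst (snd (L ! i)))"
      "k - length (fst Y) = sum_list (map (\<lambda>p. length (fst (snd p))) (take i L)) + j"
      "fst (bigcoprod T L) ! (k - length (fst Y)) = fst (snd (L ! i)) ! j"
      "snd (bigcoprod T L) (k - length (fst Y)) = Cmp T (fst (L ! i)) (snd (snd (L ! i)) j)"
      by blast
    then show ?thesis using False p by (intro exI[of _ "Suc i"]) (auto simp: nth_append)
  qed
qed

lemma ind_coprod_nth:
  assumes "k < length (fst (ind_coprod T S Ts))"
  obtains i j where "i < length (fst S)" and "j < length (fst (Ts i))"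
    and "k = (\<Sum>l\<leftarrow>[0..<i]. length (fst (Ts l))) + j"
    and "fst (ind_coprod T S Ts) ! k = fst (Ts i) ! j"
    and "snd (ind_coprod T S Ts) k = Cmp T (snd S i) (snd (Ts i) j)"
proof -
  let ?L = "map (\<lambda>i. (snd S i, Ts i)) [0..<length (fst S)]"
  obtain i j where "i < length ?L" "j < length (fst (snd (?L ! i)))"
    "k = sum_list (map (\<lambda>p. length (fst (snd p))) (take i ?L)) + j"
    "fst (bigcoprod T ?L) ! k = fst (snd (?L ! i)) ! j"
    "snd (bigcoprod T ?L) k = Cmp T (fst (?L ! i)) (snd (snd (?L ! i)) j)"
    using bigcoprod_nth assms unfolding ind_coprod_def by blast
  then show ?thesis using that by (simp add: ind_coprod_def take_map o_def)
qed

lemma bigcoprod_beyond_length: "length (fst (bigcoprod T L)) \<le> k \<Longrightarrow> snd (bigcoprod T L) k = undefined"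
  by (induction L arbitrary: k rule: bigcoprod.induct) auto

lemma bigcoprod_filter:
  assumes "\<forall>i\<in>set xs. \<not> P i \<longrightarrow> Ts i = ([], \<lambda>_. undefined)"
  shows "bigcoprod T (map (\<lambda>i. (h i, Ts i)) xs) = bigcoprod T (map (\<lambda>i. (h i, Ts i)) (filter P xs))"
  using assms by (induction xs) auto

lemma filter_upt_two:
  assumes "j < j'" and "j' < n"
  shows "filter (\<lambda>i. i = j \<or> i = j') [0..<n] = [j, j']"
proof -
  have "[0..<n] = [0..<j] @ [j..<j'] @ [j'..<n]"
    using upt_add_eq_append[of 0 j' "n - j'"] upt_add_eq_append[of 0 j "j' - j"] assms by simp
  then show ?thesis using assms by (simp add: upt_conv_Cons filter_empty_conv)
qed

definition elem_hom :: "nat \<times> 'm \<Rightarrow> (nat \<Rightarrow> nat) \<times> (nat \<Rightarrow> 'm)" where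
  "elem_hom z = (\<lambda>i. if i = 0 then fst z else 0, \<lambda>i. if i = 0 then snd z else undefined)"

definition lift_push :: "('o,'m) category \<Rightarrow> (nat \<Rightarrow> nat) \<times> (nat \<Rightarrow> 'm) \<Rightarrow> nat \<times> 'm \<Rightarrow> nat \<times> 'm" where
  "lift_push T f z = (fst f (fst z), Cmp T (snd f (fst z)) (snd z))"

lemma elem_hom_inject: "elem_hom z = elem_hom w \<longleftrightarrow> z = w"
  by (auto simp: elem_hom_def prod_eq_iff fun_eq_iff dest: spec[of _ 0])

lemma elem_hom_in_fhom:
  "elem_hom z \<in> fhom T [W] Y \<longleftrightarrow>
     fst z < length Y \<and> snd z \<in> Mor T \<and> Dom T (snd z) = W \<and> Cod T (snd z) = Y ! fst z"
  by (auto simp: elem_hom_def fhom_def)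

lemma fhom_singleton_eq_elem_hom: "u \<in> fhom T [W] Y \<Longrightarrow> u = elem_hom (fst u 0, snd u 0)"
  by (auto simp: elem_hom_def fhom_def prod_eq_iff fun_eq_iff)

lemma fcomp_elem_hom: "fcomp T (Suc 0) f (elem_hom z) = elem_hom (lift_push T f z)"
  by (simp add: fcomp_def elem_hom_def lift_push_def fun_eq_iff)

text \<open>A lift of \<open>m : W \<rightarrow> V\<close> through \<open>S \<in> F_V\<close> is an orbit index \<open>k\<close> of \<open>S\<close> with a
  morphism \<open>W \<rightarrow> S ! k\<close> over \<open>V\<close>, i.e. a map \<open>[W] \<rightarrow> S\<close> in \<open>F_V\<close>.\<close>

definition is_lift :: "('o,'m) category \<Rightarrow> 'o list \<times> (nat \<Rightarrow> 'm) \<Rightarrow> 'm \<Rightarrow> nat \<times> 'm \<Rightarrow> bool" where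
  "is_lift T S m z \<longleftrightarrow> fst z < length (fst S) \<and> snd z \<in> Mor T \<and> Dom T (snd z) = Dom T m \<and>
     Cod T (snd z) = fst S ! fst z \<and> Cmp T (snd S (fst z)) (snd z) = m"

lemma is_liftD:
  assumes "is_lift T S m z"
  shows "fst z < length (fst S)" and "snd z \<in> Mor T" and "Dom T (snd z) = Dom T m"
    and "Cod T (snd z) = fst S ! fst z" and "Cmp T (snd S (fst z)) (snd z) = m"
  using assms unfolding is_lift_def by blast+

definition uniquely_lifting :: "('o,'m) category \<Rightarrow> 'o set \<Rightarrow> ('o,'m) tsub" where
  "uniquely_lifting T N V = {S \<in> fobj_over T V. V \<in> Ob T \<and>
     (\<forall>m\<in>Mor T. Cod T m = V \<longrightarrow> Dom T m \<notin> N \<longrightarrow>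
        (\<forall>x y. is_lift T S m x \<longrightarrow> is_lift T S m y \<longrightarrow> x = y))}"

lemma uniquely_liftingI:
  assumes "V \<in> Ob T" and "S \<in> fobj_over T V"
    and "\<And>m x y. m \<in> Mor T \<Longrightarrow> Cod T m = V \<Longrightarrow> Dom T m \<notin> N \<Longrightarrow>
           is_lift T S m x \<Longrightarrow> is_lift T S m y \<Longrightarrow> x = y"
  shows "S \<in> uniquely_lifting T N V"
  using assms unfolding uniquely_lifting_def by blast

lemma uniquely_liftingD:
  assumes "S \<in> uniquely_lifting T N V"
  shows "V \<in> Ob T" and "S \<in> fobj_over T V"
    and "m \<in> Mor T \<Longrightarrow> Cod T m = V \<Longrightarrow> Dom T m \<notin> N \<Longrightarrow>
           is_lift T S m x \<Longrightarrow> is_lift T S m y \<Longrightarrow> x = y"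
  using assms unfolding uniquely_lifting_def by blast+

locale small_category =
  fixes T :: "('o,'m) category"
  assumes is_category: "is_category T"
begin

lemma Dom_in_Ob [simp]: "f \<in> Mor T \<Longrightarrow> Dom T f \<in> Ob T"
  and Cod_in_Ob [simp]: "f \<in> Mor T \<Longrightarrow> Cod T f \<in> Ob T"
  using is_category unfolding is_category_def by blast+

lemma Idt_in_Mor [simp]: "a \<in> Ob T \<Longrightarrow> Idt T a \<in> Mor T"
  and Dom_Idt [simp]: "a \<in> Ob T \<Longrightarrow> Dom T (Idt T a) = a"
  and Cod_Idt [simp]: "a \<in> Ob T \<Longrightarrow> Cod T (Idt T a) = a"
  using is_category unfolding is_category_def by blast+

lemma Cmp_in_Mor [simp]: "f \<in> Mor T \<Longrightarrow> g \<in> Mor T \<Longrightarrow> Cod T f = Dom T g \<Longrightarrow> Cmp T g f \<in> Mor T"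
  and Dom_Cmp [simp]: "f \<in> Mor T \<Longrightarrow> g \<in> Mor T \<Longrightarrow> Cod T f = Dom T g \<Longrightarrow> Dom T (Cmp T g f) = Dom T f"
  and Cod_Cmp [simp]: "f \<in> Mor T \<Longrightarrow> g \<in> Mor T \<Longrightarrow> Cod T f = Dom T g \<Longrightarrow> Cod T (Cmp T g f) = Cod T g"
  using is_category unfolding is_category_def by blast+

lemma Cmp_Idt_right [simp]: "f \<in> Mor T \<Longrightarrow> Dom T f = a \<Longrightarrow> Cmp T f (Idt T a) = f"
  and Cmp_Idt_left [simp]: "f \<in> Mor T \<Longrightarrow> Cod T f = a \<Longrightarrow> Cmp T (Idt T a) f = f"
  using is_category unfolding is_category_def by blast+

lemma Cmp_assoc:
  "f \<in> Mor T \<Longrightarrow> g \<in> Mor T \<Longrightarrow> h \<in> Mor T \<Longrightarrow> Cod T f = Dom T g \<Longrightarrow> Cod T g = Dom T h \<Longrightarrow>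
     Cmp T h (Cmp T g f) = Cmp T (Cmp T h g) f"
  using is_category unfolding is_category_def by blast

lemma iso_section_unique:
  assumes "cat_iso T f"
    and s: "s \<in> Mor T" "Dom T s = Cod T f" "Cod T s = Dom T f" "Cmp T f s = Idt T (Cod T f)"
    and s': "s' \<in> Mor T" "Dom T s' = Cod T f" "Cod T s' = Dom T f" "Cmp T f s' = Idt T (Cod T f)"
  shows "s = s'"
proof -
  obtain g where f: "f \<in> Mor T" and g: "g \<in> Mor T" "Dom T g = Cod T f" "Cod T g = Dom T f"
    "Cmp T g f = Idt T (Dom T f)"
    using assms(1) unfolding cat_iso_def by blast
  have "t = g" if t: "t \<in> Mor T" "Dom T t = Cod T f" "Cod T t = Dom T f" "Cmp T f t = Idt T (Cod T f)"
    for t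
  proof -
    have "t = Cmp T (Cmp T g f) t" using t g by simp
    also have "\<dots> = Cmp T g (Cmp T f t)" by (rule Cmp_assoc[symmetric]) (use t g f in simp_all)
    also have "\<dots> = g" using t g by simp
    finally show ?thesis .
  qed
  then show ?thesis using s s' by metis
qed

lemma is_lift_push:
  assumes f: "f \<in> fhom_over T S' S" and S: "S \<in> fobj_over T V" and z: "is_lift T S' m z"
  shows "is_lift T S m (lift_push T f z)"
proof -
  let ?k = "fst z"
  have k: "?k < length (fst S')" using z by (simp add: is_lift_def)
  have fk: "fst f ?k < length (fst S)" "snd f ?k \<in> Mor T" "Dom T (snd f ?k) = fst S' ! ?k"
    "Cod T (snd f ?k) = fst S ! fst f ?k"
    using f k by (auto simp: fhom_over_def dest: fhomD)
  note Sk = fobj_overD[OF S fk(1)]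
  have "Cmp T (snd S (fst f ?k)) (Cmp T (snd f ?k) (snd z)) = Cmp T (snd S' ?k) (snd z)"
    using fk Sk z by (simp add: Cmp_assoc is_lift_def fhom_over_structure_map[OF f k])
  then show ?thesis using fk Sk z by (simp add: is_lift_def lift_push_def)
qed

lemma lift_push_fcomp:
  assumes "a \<in> fhom T (fst S) B" and "b \<in> fhom T B C" and z: "is_lift T S m z"
  shows "lift_push T (fcomp T (length (fst S)) b a) z = lift_push T b (lift_push T a z)"
proof -
  have k: "fst z < length (fst S)" using z by (simp add: is_lift_def)
  note ak = fhomD[OF assms(1) k] and bk = fhomD[OF assms(2) ak(1)]
  show ?thesis using k ak bk z by (simp add: fcomp_def lift_push_def is_lift_def Cmp_assoc)
qed

lemma lift_push_fid: "is_lift T S m z \<Longrightarrow> lift_push T (fid T (fst S)) z = z"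
  by (simp add: is_lift_def lift_push_def fid_def)

lemma uniquely_lifting_iso:
  assumes S: "S \<in> uniquely_lifting T N V" and S': "S' \<in> fobj_over T V" and iso: "iso_over T S S'"
  shows "S' \<in> uniquely_lifting T N V"
proof (rule uniquely_liftingI[OF uniquely_liftingD(1)[OF S] S'])
  obtain f f' where f: "f \<in> fhom_over T S S'" and f': "f' \<in> fhom_over T S' S"
    and inv: "fcomp T (length (fst S')) f f' = fid T (fst S')"
    using iso unfolding iso_over_def by blast
  have retract: "lift_push T f (lift_push T f' z) = z" if "is_lift T S' m z" for m z
    using lift_push_fcomp[of f' S' "fst S" f "fst S'"] f f' that inv lift_push_fid[OF that]
    by (simp add: fhom_over_def)
  fix m x y
  assume m: "m \<in> Mor T" "Cod T m = V" "Dom T m \<notin> N" and x: "is_lift T S' m x" and y: "is_lift T S' m y"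
  have "lift_push T f' x = lift_push T f' y"
    using uniquely_liftingD(3)[OF S m] is_lift_push[OF f' uniquely_liftingD(2)[OF S]] x y by blast
  then show "x = y" using retract[OF x] retract[OF y] by metis
qed

lemma star_in_fobj_over: "V \<in> Ob T \<Longrightarrow> star T V \<in> fobj_over T V"
  by (auto simp: star_def fobj_over_def fobj_def)

lemma two_star_in_fobj_over: "V \<in> Ob T \<Longrightarrow> two_star T V \<in> fobj_over T V"
  by (auto simp: two_star_def fobj_over_def fobj_def nth_Cons')

lemma uniquely_lifting_star:
  assumes V: "V \<in> Ob T"
  shows "star T V \<in> uniquely_lifting T N V"
proof (rule uniquely_liftingI[OF V star_in_fobj_over[OF V]])
  fix m x y
  assume "m \<in> Mor T" "Cod T m = V" "is_lift T (star T V) m x" "is_lift T (star T V) m y"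
  then show "x = y" by (auto simp: is_lift_def star_def prod_eq_iff)
qed

lemma mem_of_two_star_uniquely_lifting:
  assumes V: "V \<in> Ob T" and two: "two_star T V \<in> uniquely_lifting T N V"
  shows "V \<in> N"
proof (rule ccontr)
  assume "V \<notin> N"
  moreover have "is_lift T (two_star T V) (Idt T V) (0, Idt T V)"
    and "is_lift T (two_star T V) (Idt T V) (1, Idt T V)"
    using V by (auto simp: is_lift_def two_star_def)
  ultimately have "(0::nat, Idt T V) = (1, Idt T V)"
    by (intro uniquely_liftingD(3)[OF two]) (use V in simp_all)
  then show False by simp
qed

context
  fixes m :: 'm and S P p1 p2
  assumes m: "m \<in> Mor T" and S: "S \<in> fobj_over T (Cod T m)"
    and pb: "is_pullback T (fst S) [Dom T m] P (to_base S)
               (\<lambda>_. 0, \<lambda>i. if i = 0 then m else undefined) p1 p2"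
begin

lemma restriction_in_fobj_over: "(P, snd p2) \<in> fobj_over T (Dom T m)"
  using pb unfolding is_pullback_def fobj_over_def fhom_def by auto

lemma restriction_pullback_square:
  assumes k: "k < length P"
  shows "Cmp T (snd S (fst p1 k)) (snd p1 k) = Cmp T m (snd p2 k)"
proof -
  have p2: "p2 \<in> fhom T P [Dom T m]"
    and sq: "fcomp T (length P) (to_base S) p1 =
        fcomp T (length P) (\<lambda>_. 0, \<lambda>i. if i = 0 then m else undefined) p2"
    using pb unfolding is_pullback_def by blast+
  from fun_cong[OF arg_cong[where f = snd, OF sq], of k] show ?thesis
    using k fhomD(1)[OF p2 k] by (simp add: fcomp_def to_base_def)
qed

lemma restriction_lift_push_p2:
  assumes z: "is_lift T (P, snd p2) m' z"
  shows "lift_push T p2 z = (0, m')"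
proof -
  have "p2 \<in> fhom T P [Dom T m]" using pb unfolding is_pullback_def by blast
  then show ?thesis using z fhomD(1) by (fastforce simp: is_lift_def lift_push_def)
qed

lemma restriction_lift:
  assumes z: "is_lift T (P, snd p2) m' z"
  shows "is_lift T S (Cmp T m m') (lift_push T p1 z)"
proof -
  let ?k = "fst z"
  note zk = is_liftD[OF z, simplified]
  have p1: "p1 \<in> fhom T P (fst S)" using pb unfolding is_pullback_def by blast
  note p1k = fhomD[OF p1 zk(1)] and p2k = fobj_overD[OF restriction_in_fobj_over, simplified, OF zk(1)]
  note Sk = fobj_overD[OF S p1k(1)]
  have "Cmp T (snd S (fst p1 ?k)) (Cmp T (snd p1 ?k) (snd z)) = Cmp T (Cmp T m (snd p2 ?k)) (snd z)"
    using p1k Sk zk by (simp add: Cmp_assoc restriction_pullback_square[OF zk(1)])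
  also have "\<dots> = Cmp T m m'"
    using p2k zk m by (simp add: Cmp_assoc[symmetric])
  finally show ?thesis using p1k Sk zk p2k m by (auto simp: is_lift_def lift_push_def)
qed

lemma restriction_lift_cone:
  assumes x: "is_lift T S (Cmp T m m') x" and m': "m' \<in> Mor T" "Cod T m' = Dom T m"
  shows "\<exists>!u. u \<in> fhom T [Dom T m'] P \<and>
           fcomp T (Suc 0) p1 u = elem_hom x \<and> fcomp T (Suc 0) p2 u = elem_hom (0, m')"
proof -
  have univ: "\<And>Q q1 q2. fobj T Q \<Longrightarrow> q1 \<in> fhom T Q (fst S) \<Longrightarrow> q2 \<in> fhom T Q [Dom T m] \<Longrightarrow>
      fcomp T (length Q) (to_base S) q1 =
        fcomp T (length Q) (\<lambda>_. 0, \<lambda>i. if i = 0 then m else undefined) q2 \<Longrightarrow>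
      \<exists>!u. u \<in> fhom T Q P \<and> fcomp T (length Q) p1 u = q1 \<and> fcomp T (length Q) p2 u = q2"
    using pb unfolding is_pullback_def by blast
  have "fobj T [Dom T m']" using m' by (simp add: fobj_def)
  moreover have "elem_hom x \<in> fhom T [Dom T m'] (fst S)" "elem_hom (0, m') \<in> fhom T [Dom T m'] [Dom T m]"
    using x m m' by (simp_all add: elem_hom_in_fhom is_lift_def)
  moreover have "fcomp T (Suc 0) (to_base S) (elem_hom x) =
      fcomp T (Suc 0) (\<lambda>_. 0, \<lambda>i. if i = 0 then m else undefined) (elem_hom (0, m'))"
    using x by (simp add: fcomp_elem_hom elem_hom_inject lift_push_def to_base_def is_lift_def)
  ultimately show ?thesis using univ[of "[Dom T m']"] by simp
qed

lemma restriction_lift_inj: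
  assumes z: "is_lift T (P, snd p2) m' z" and w: "is_lift T (P, snd p2) m' w"
    and eq: "lift_push T p1 z = lift_push T p1 w"
  shows "z = w"
proof -
  have m': "m' \<in> Mor T" "Cod T m' = Dom T m"
    using fobj_overD[OF restriction_in_fobj_over] z by (auto simp: is_lift_def)
  note cone = restriction_lift_cone[OF restriction_lift[OF z] m']
  have "elem_hom v \<in> fhom T [Dom T m'] P \<and> fcomp T (Suc 0) p1 (elem_hom v) = elem_hom (lift_push T p1 z)
      \<and> fcomp T (Suc 0) p2 (elem_hom v) = elem_hom (0, m')" if v: "v \<in> {z, w}" for v
    using v z w eq by (auto simp: elem_hom_in_fhom fcomp_elem_hom restriction_lift_push_p2 is_lift_def)
  then have "elem_hom z = elem_hom w" using cone by blast
  then show ?thesis by (simp add: elem_hom_inject)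
qed

lemma restriction_lift_surj:
  assumes x: "is_lift T S (Cmp T m m') x" and m': "m' \<in> Mor T" "Cod T m' = Dom T m"
  obtains z where "is_lift T (P, snd p2) m' z" and "lift_push T p1 z = x"
proof -
  obtain u where u: "u \<in> fhom T [Dom T m'] P" and u1: "fcomp T (Suc 0) p1 u = elem_hom x"
    and u2: "fcomp T (Suc 0) p2 u = elem_hom (0, m')"
    using restriction_lift_cone[OF x m'] by blast
  define z where "z = (fst u 0, snd u 0)"
  have u_eq: "u = elem_hom z" unfolding z_def by (rule fhom_singleton_eq_elem_hom[OF u])
  have "lift_push T p1 z = x" "lift_push T p2 z = (0, m')"
    using u1 u2 by (simp_all add: u_eq fcomp_elem_hom elem_hom_inject)
  moreover have "fst z < length P" "snd z \<in> Mor T" "Dom T (snd z) = Dom T m'" "Cod T (snd z) = P ! fst z"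
    using u by (simp_all add: u_eq elem_hom_in_fhom)
  ultimately have "is_lift T (P, snd p2) m' z" by (simp add: is_lift_def lift_push_def)
  then show ?thesis using that \<open>lift_push T p1 z = x\<close> by blast
qed

lemma uniquely_lifting_restriction:
  assumes SN: "S \<in> uniquely_lifting T N (Cod T m)"
  shows "(P, snd p2) \<in> uniquely_lifting T N (Dom T m)"
proof (rule uniquely_liftingI[OF _ restriction_in_fobj_over])
  show "Dom T m \<in> Ob T" using m by simp
  fix m' x y
  assume m': "m' \<in> Mor T" "Cod T m' = Dom T m" "Dom T m' \<notin> N"
    and x: "is_lift T (P, snd p2) m' x" and y: "is_lift T (P, snd p2) m' y"
  have "lift_push T p1 x = lift_push T p1 y"
    using uniquely_liftingD(3)[OF SN _ _ _ restriction_lift[OF x] restriction_lift[OF y]] m m' by simp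
  then show "x = y" using restriction_lift_inj[OF x y] by blast
qed

end


lemma ind_coprod_in_fobj_over:
  assumes S: "S \<in> fobj_over T V" and Ts: "\<And>i. i < length (fst S) \<Longrightarrow> Ts i \<in> fobj_over T (fst S ! i)"
  shows "ind_coprod T S Ts \<in> fobj_over T V"
proof -
  let ?X = "ind_coprod T S Ts"
  have "snd ?X k \<in> Mor T \<and> Dom T (snd ?X k) = fst ?X ! k \<and> Cod T (snd ?X k) = V \<and> fst ?X ! k \<in> Ob T"
    if k: "k < length (fst ?X)" for k
  proof -
    obtain i j where ij: "i < length (fst S)" "j < length (fst (Ts i))" "fst ?X ! k = fst (Ts i) ! j"
      "snd ?X k = Cmp T (snd S i) (snd (Ts i) j)"
      using ind_coprod_nth[OF k] by metis
    show ?thesis using ij fobj_overD[OF S ij(1)] fobj_overD[OF Ts[OF ij(1)] ij(2)] by simp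
  qed
  moreover have "snd ?X k = undefined" if "length (fst ?X) \<le> k" for k
    using that bigcoprod_beyond_length unfolding ind_coprod_def by blast
  ultimately show ?thesis unfolding fobj_over_def fobj_def by (auto simp: in_set_conv_nth)
qed

lemma ind_coprod_lift_split:
  assumes S: "S \<in> fobj_over T V" and Ts: "\<And>i. i < length (fst S) \<Longrightarrow> Ts i \<in> fobj_over T (fst S ! i)"
    and z: "is_lift T (ind_coprod T S Ts) m z"
  obtains i j where "i < length (fst S)" and "j < length (fst (Ts i))"
    and "fst z = (\<Sum>l\<leftarrow>[0..<i]. length (fst (Ts l))) + j"
    and "is_lift T S m (i, Cmp T (snd (Ts i) j) (snd z))"
    and "is_lift T (Ts i) (Cmp T (snd (Ts i) j) (snd z)) (j, snd z)"
proof -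
  note zk = is_liftD[OF z]
  obtain i j where ij: "i < length (fst S)" "j < length (fst (Ts i))"
    "fst z = (\<Sum>l\<leftarrow>[0..<i]. length (fst (Ts l))) + j"
    "fst (ind_coprod T S Ts) ! fst z = fst (Ts i) ! j"
    "snd (ind_coprod T S Ts) (fst z) = Cmp T (snd S i) (snd (Ts i) j)"
    using ind_coprod_nth[OF zk(1)] by metis
  note Si = fobj_overD[OF S ij(1)] and Tij = fobj_overD[OF Ts[OF ij(1)] ij(2)]
  have "Cmp T (snd S i) (Cmp T (snd (Ts i) j) (snd z)) = m"
    using zk ij Si Tij by (simp add: Cmp_assoc)
  then show ?thesis using that ij zk Si Tij by (simp add: is_lift_def)
qed

lemma uniquely_lifting_ind_coprod:
  assumes S: "S \<in> uniquely_lifting T N V"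
    and Ts: "\<And>i. i < length (fst S) \<Longrightarrow> Ts i \<in> uniquely_lifting T N (fst S ! i)"
  shows "ind_coprod T S Ts \<in> uniquely_lifting T N V"
proof (rule uniquely_liftingI)
  note Sfo = uniquely_liftingD(2)[OF S] and Tsfo = uniquely_liftingD(2)[OF Ts]
  show "V \<in> Ob T" using uniquely_liftingD(1)[OF S] .
  show "ind_coprod T S Ts \<in> fobj_over T V" using ind_coprod_in_fobj_over[OF Sfo Tsfo] .
  fix m x y
  assume m: "m \<in> Mor T" "Cod T m = V" "Dom T m \<notin> N"
    and x: "is_lift T (ind_coprod T S Ts) m x" and y: "is_lift T (ind_coprod T S Ts) m y"
  obtain i j where i: "i < length (fst S)" and x_idx: "fst x = (\<Sum>l\<leftarrow>[0..<i]. length (fst (Ts l))) + j"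
    and xS: "is_lift T S m (i, Cmp T (snd (Ts i) j) (snd x))"
    and xT: "is_lift T (Ts i) (Cmp T (snd (Ts i) j) (snd x)) (j, snd x)"
    using ind_coprod_lift_split[OF Sfo Tsfo x] .
  obtain i' j' where y_idx: "fst y = (\<Sum>l\<leftarrow>[0..<i']. length (fst (Ts l))) + j'"
    and yS: "is_lift T S m (i', Cmp T (snd (Ts i') j') (snd y))"
    and yT: "is_lift T (Ts i') (Cmp T (snd (Ts i') j') (snd y)) (j', snd y)"
    using ind_coprod_lift_split[OF Sfo Tsfo y] .
  have ii': "i' = i" and gg': "Cmp T (snd (Ts i') j') (snd y) = Cmp T (snd (Ts i) j) (snd x)"
    using uniquely_liftingD(3)[OF S m xS yS] by auto
  have "(j, snd x) = (j', snd y)"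
    using uniquely_liftingD(3)[OF Ts[OF i] _ _ _ xT yT[unfolded gg', unfolded ii']] m is_liftD[OF xS]
    by simp
  then show "x = y" using x_idx y_idx ii' by (simp add: prod_eq_iff)
qed

lemma weak_indexing_system_uniquely_lifting: "weak_indexing_system T (uniquely_lifting T N)"
  unfolding weak_indexing_system_def full_Tsub_def
proof (intro conjI ballI allI impI)
  show "uniquely_lifting T N V = {}" if "V \<notin> Ob T" for V
    using that by (auto dest: uniquely_liftingD(1))
  show "uniquely_lifting T N V \<subseteq> fobj_over T V" for V
    by (auto dest: uniquely_liftingD(2))
  show "S' \<in> uniquely_lifting T N V"
    if "S \<in> uniquely_lifting T N V \<and> S' \<in> fobj_over T V \<and> iso_over T S S'" for V S S'
    using uniquely_lifting_iso that by blast
  show "(P, snd p2) \<in> uniquely_lifting T N (Dom T m)"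
    if "m \<in> Mor T" and "S \<in> uniquely_lifting T N (Cod T m) \<and>
        is_pullback T (fst S) [Dom T m] P (to_base S) (\<lambda>_. 0, \<lambda>i. if i = 0 then m else undefined) p1 p2"
    for m S P p1 p2
    using that uniquely_lifting_restriction[OF that(1) uniquely_liftingD(2)] by blast
  show "star T V \<in> uniquely_lifting T N V" if "V \<in> Ob T" for V
    using uniquely_lifting_star[OF that] .
  show "ind_coprod T S Ts \<in> uniquely_lifting T N V"
    if "S \<in> uniquely_lifting T N V \<and> (\<forall>i<length (fst S). Ts i \<in> uniquely_lifting T N (fst S ! i))"
    for V S Ts
    using uniquely_lifting_ind_coprod that by blast
qed


lemma identity_lift_iso:
  assumes at: "atomic T" and X: "X \<in> fobj_over T W" and z: "is_lift T X (Idt T W) z"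
  shows "cat_iso T (snd X (fst z))"
proof -
  note zk = is_liftD[OF z] and Xk = fobj_overD[OF X is_liftD(1)[OF z]]
  have W: "W \<in> Ob T" using Xk by (metis Cod_in_Ob)
  show ?thesis using at Xk zk W unfolding atomic_def by (metis Dom_Idt)
qed

lemma identity_lift_unique:
  assumes at: "atomic T" and X: "X \<in> fobj_over T W"
    and z: "is_lift T X (Idt T W) z" and w: "is_lift T X (Idt T W) w" and eq: "fst z = fst w"
  shows "z = w"
proof -
  note zk = is_liftD[OF z] and wk = is_liftD[OF w] and Xk = fobj_overD[OF X is_liftD(1)[OF z]]
  have W: "W \<in> Ob T" using Xk by (metis Cod_in_Ob)
  have "snd z = snd w"
    using iso_section_unique[OF identity_lift_iso[OF at X z]] zk wk Xk W eq by simp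
  then show ?thesis using eq by (simp add: prod_eq_iff)
qed

lemma iso_over_two_star:
  assumes X: "X \<in> fobj_over T W" and len: "length (fst X) = 2"
    and iso: "cat_iso T (snd X 0)" "cat_iso T (snd X 1)"
  shows "iso_over T X (two_star T W)"
proof -
  have Xi: "snd X i \<in> Mor T" "Dom T (snd X i) = fst X ! i" "Cod T (snd X i) = W" if "i < 2" for i
    using fobj_overD[OF X] that len by auto
  have X_beyond: "snd X i = undefined" if "\<not> i < 2" for i
    using X that len by (auto simp: fobj_over_def)
  have W: "W \<in> Ob T" using Xi(1,3)[of 0] Cod_in_Ob by fastforce
  have "\<exists>g. g \<in> Mor T \<and> Dom T g = W \<and> Cod T g = fst X ! i \<and>
      Cmp T g (snd X i) = Idt T (fst X ! i) \<and> Cmp T (snd X i) g = Idt T W" if i: "i < 2" for i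
  proof -
    have "cat_iso T (snd X i)" using iso i by (cases i) auto
    then show ?thesis using Xi[OF i] unfolding cat_iso_def by auto
  qed
  then obtain g where g: "\<And>i. i < 2 \<Longrightarrow> g i \<in> Mor T \<and> Dom T (g i) = W \<and> Cod T (g i) = fst X ! i \<and>
      Cmp T (g i) (snd X i) = Idt T (fst X ! i) \<and> Cmp T (snd X i) (g i) = Idt T W"
    by metis
  define f where "f = (\<lambda>i::nat. if i < 2 then i else 0, \<lambda>i. if i < 2 then snd X i else undefined)"
  define f' where "f' = (\<lambda>i::nat. if i < 2 then i else 0, \<lambda>i. if i < 2 then g i else undefined)"
  have two: "length (fst (two_star T W)) = 2" "\<And>i. i < 2 \<Longrightarrow> fst (two_star T W) ! i = W"
    "\<And>i. snd (two_star T W) i = (if i < 2 then Idt T W else undefined)"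
    by (auto simp: two_star_def less_Suc_eq nth_Cons')
  have "f \<in> fhom_over T X (two_star T W)"
    using Xi X_beyond W len two
    by (auto simp: fhom_over_def fhom_def f_def fcomp_def to_base_def fun_eq_iff)
  moreover have "f' \<in> fhom_over T (two_star T W) X"
    using g Xi len two
    by (auto simp: fhom_over_def fhom_def f'_def fcomp_def to_base_def fun_eq_iff)
  moreover have "fcomp T (length (fst X)) f' f = fid T (fst X)"
    using g Xi len by (auto simp: f_def f'_def fcomp_def fid_def fun_eq_iff)
  moreover have "fcomp T (length (fst (two_star T W))) f f' = fid T (fst (two_star T W))"
    using g Xi two by (auto simp: f_def f'_def fcomp_def fid_def fun_eq_iff)
  ultimately show ?thesis unfolding iso_over_def by blast
qed

lemma unital_star: "unital T C \<Longrightarrow> U \<in> Ob T \<Longrightarrow> star T U \<in> C U"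
  unfolding unital_def weak_indexing_system_def by blast

lemma unital_empty:
  assumes u: "unital T C" and U: "U \<in> Ob T"
  shows "([], \<lambda>_. undefined) \<in> C U"
proof -
  have "coprod_over ([], \<lambda>_. undefined) (star T U) \<in> C U"
    using unital_star[OF u U] by (simp add: coprod_over_def)
  moreover have "([], \<lambda>_. undefined) \<in> fobj_over T U" by (simp add: fobj_over_def fobj_def)
  ultimately show ?thesis using u U star_in_fobj_over[OF U] unfolding unital_def by blast
qed

text \<open>Two orbits of \<open>X\<close> isomorphic to \<open>W\<close> are cut out of \<open>X\<close> by \<open>\<Coprod>\<^sup>X\<close> of
  \<open>*\<close> on these orbits and \<open>\<emptyset>\<close> on all others; unitality puts both in \<open>C\<close>.\<close>

lemma unital_two_star:
  assumes u: "unital T C" and X: "X \<in> C W" and k: "k < k'" "k' < length (fst X)"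
    and iso: "cat_iso T (snd X k)" "cat_iso T (snd X k')"
  shows "two_star T W \<in> C W"
proof -
  have wis: "weak_indexing_system T C" and full: "full_Tsub T C"
    using u by (simp_all add: unital_def weak_indexing_system_def)
  have W: "W \<in> Ob T" and Xfo: "X \<in> fobj_over T W" using full X unfolding full_Tsub_def by blast+
  define Ts where "Ts = (\<lambda>i. if i = k \<or> i = k' then star T (fst X ! i) else ([], \<lambda>_. undefined))"
  have "Ts i \<in> C (fst X ! i)" if "i < length (fst X)" for i
    using unital_star[OF u] unital_empty[OF u] fobj_overD(4)[OF Xfo that] unfolding Ts_def by simp
  then have Y: "ind_coprod T X Ts \<in> C W"
    using wis W X unfolding weak_indexing_system_def by blast
  have "ind_coprod T X Ts =
      bigcoprod T (map (\<lambda>i. (snd X i, Ts i)) (filter (\<lambda>i. i = k \<or> i = k') [0..<length (fst X)]))"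
    unfolding ind_coprod_def by (rule bigcoprod_filter) (simp add: Ts_def)
  also have "\<dots> = bigcoprod T [(snd X k, star T (fst X ! k)), (snd X k', star T (fst X ! k'))]"
    using filter_upt_two[OF k] by (simp add: Ts_def)
  finally have Y_eq: "fst (ind_coprod T X Ts) = [fst X ! k, fst X ! k']"
    "snd (ind_coprod T X Ts) 0 = snd X k" "snd (ind_coprod T X Ts) 1 = snd X k'"
    using fobj_overD[OF Xfo] k by (simp_all add: star_def)
  have Yfo: "ind_coprod T X Ts \<in> fobj_over T W" using full Y W unfolding full_Tsub_def by blast
  have "iso_over T (ind_coprod T X Ts) (two_star T W)"
    using iso_over_two_star[OF Yfo] Y_eq iso by simp
  then show ?thesis using full Y W two_star_in_fobj_over[OF W] unfolding full_Tsub_def by blast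
qed

lemma orbital_restriction_pullback:
  assumes "orbital T" and m: "m \<in> Mor T" and S: "S \<in> fobj_over T (Cod T m)"
  obtains P p1 p2
    where "is_pullback T (fst S) [Dom T m] P (to_base S)
             (\<lambda>_. 0, \<lambda>i. if i = 0 then m else undefined) p1 p2"
proof -
  have "fobj T (fst S)" using S by (cases S) (simp add: fobj_over_def)
  moreover have "fobj T [Dom T m]" "fobj T [Cod T m]" using m by (simp_all add: fobj_def)
  moreover have "(\<lambda>_. 0, \<lambda>i. if i = 0 then m else undefined) \<in> fhom T [Dom T m] [Cod T m]"
    using m by (simp add: fhom_def)
  ultimately show ?thesis using assms(1) to_base_in_fhom[OF S] that unfolding orbital_def by blast
qed

lemma unital_subset_uniquely_lifting:
  assumes orb: "orbital T" and at: "atomic T" and u: "unital T C" and N: "nabla T C \<subseteq> N"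
  shows "C V \<subseteq> uniquely_lifting T N V"
proof
  fix S assume S: "S \<in> C V"
  have full: "full_Tsub T C" using u by (simp add: unital_def weak_indexing_system_def)
  have V: "V \<in> Ob T" and Sfo: "S \<in> fobj_over T V" using full S unfolding full_Tsub_def by blast+
  show "S \<in> uniquely_lifting T N V"
  proof (rule uniquely_liftingI[OF V Sfo], rule ccontr)
    fix m x y
    assume m: "m \<in> Mor T" "Cod T m = V" "Dom T m \<notin> N"
      and x: "is_lift T S m x" and y: "is_lift T S m y" and "x \<noteq> y"
    let ?W = "Dom T m"
    have W: "?W \<in> Ob T" and Sm: "S \<in> fobj_over T (Cod T m)" using m Sfo by simp_all
    obtain P p1 p2 where pb: "is_pullback T (fst S) [?W] P (to_base S)
        (\<lambda>_. 0, \<lambda>i. if i = 0 then m else undefined) p1 p2"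
      using orbital_restriction_pullback[OF orb m(1) Sm] .
    have R: "(P, snd p2) \<in> C ?W" using full m(1) S m(2) pb unfolding full_Tsub_def by blast
    note RW = restriction_in_fobj_over[OF m(1) Sm pb]
    note lift_surj = restriction_lift_surj[OF m(1) Sm pb _ Idt_in_Mor[OF W] Cod_Idt[OF W]]
    obtain zx where zx: "is_lift T (P, snd p2) (Idt T ?W) zx" "lift_push T p1 zx = x"
      using lift_surj x m(1) by simp blast
    obtain zy where zy: "is_lift T (P, snd p2) (Idt T ?W) zy" "lift_push T p1 zy = y"
      using lift_surj y m(1) by simp blast
    have "fst zx \<noteq> fst zy"
      using identity_lift_unique[OF at RW zx(1) zy(1)] zx(2) zy(2) \<open>x \<noteq> y\<close> by blast
    then have "two_star T ?W \<in> C ?W"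
      using unital_two_star[OF u R] identity_lift_iso[OF at RW] zx(1) zy(1) is_liftD(1)
      by (metis linorder_neqE_nat fst_conv)
    then have "?W \<in> N" using N W unfolding nabla_def by auto
    then show False using m(3) by simp
  qed
qed

end

lemma wis_join_upper: "C V \<subseteq> wis_join T C D V" "D V \<subseteq> wis_join T C D V"
  unfolding wis_join_def by blast+

lemma wis_join_least:
  "weak_indexing_system T E \<Longrightarrow> (\<And>W. C W \<subseteq> E W) \<Longrightarrow> (\<And>W. D W \<subseteq> E W) \<Longrightarrow>
     wis_join T C D V \<subseteq> E V"
  unfolding wis_join_def by blast

lemma nabla_mono: "(\<And>V. C V \<subseteq> D V) \<Longrightarrow> nabla T C \<subseteq> nabla T D"
  unfolding nabla_def by blast

theorem mainTheorem17:
  fixes T :: "('o,'m) category" and C D :: "('o,'m) tsub"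
  assumes "is_category T" and "orbital T" and "atomic T"
    and "unital T C" and "unital T D"
  shows "nabla T (wis_join T C D) = nabla T C \<union> nabla T D"
proof -
  interpret small_category T by (rule small_category.intro) fact
  define N where "N = nabla T C \<union> nabla T D"
  have "wis_join T C D V \<subseteq> uniquely_lifting T N V" for V
    using weak_indexing_system_uniquely_lifting
      unital_subset_uniquely_lifting[OF assms(2,3,4)] unital_subset_uniquely_lifting[OF assms(2,3,5)]
    by (rule wis_join_least) (auto simp: N_def)
  then have "nabla T (wis_join T C D) \<subseteq> N"
    using mem_of_two_star_uniquely_lifting unfolding nabla_def by blast
  moreover have "N \<subseteq> nabla T (wis_join T C D)"
    unfolding N_def by (intro Un_least nabla_mono wis_join_upper)
  ultimately show ?thesis unfolding N_def by blast
qed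

end
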